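(* Let $K\ge1$, $\Delta_0,B>0$, and for $k=1,\dots,K$ let $m_k\ge0$ and $v_k\ge 0$ be given numbers (the mean and variance of user $k$'s SNR). Let $\mathcal{G}\subset\mathbb{R}^K$ be the set of $\mathbf{r}$ for which there exist $\mathbf{p},\mathbf{y}\in\mathbb{R}^K$ and a $2K\times2K$ real matrix $\mathbf{H}=\begin{bmatrix}\mathbf{H}^{xx}&\mathbf{H}^{x\phi}\\(\mathbf{H}^{x\phi})^{\rm T}&\mathbf{H}^{\phi\phi}\end{bmatrix}$ (with $K\times K$ blocks) satisfying: (C1) $r_k\ge0$ for all $k$; (C2) $r_k\le \Delta_0B\,p_k\log_2(1+y_k/p_k)$ for all $k$; (C3) $0\le p_k\le1$ for all $k$; (C4) $\sum_k p_k\le1$; (C5) $H^{x\phi}_{k,k}=y_k-p_km_k$ for all $k$; (C6) $H^{\phi\phi}_{k,k}=v_k$ and $H^{\phi\phi}_{i,j}=0$ for $i\ne j$; (C7) $H^{xx}_{k,k}\le p_k-p_k^2$ for all $k$; (C8) $\sum_{i,j}H^{xx}_{i,j}\le\sum_ip_i-(\sum_ip_i)^2$; (C9) $\mathbf{H}\succeq0$. For $\mathbf{w}\in\mathbb{R}^K$ with $\mathbf{w}>0$ and $\|\mathbf{w}\|_2=1$ let $\mathbf{r}^{\sim\mu(\cdot|\mathbf{w})}_{\mathcal{G}}=\arg\max_{\mathbf{r}\in\mathcal{G}}\langle\mathbf{w},\mathbf{r}\rangle$ (the estimated rates), let $f(\mathbf{r})=\sum_{k=1}^K\ln r_k$, and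 let $\mathbf{r}^*=\arg\max_{\mathbf{r}\in\mathcal{G}}f(\mathbf{r})$. Consider the problem (P2) of maximizing $f(\mathbf{r}^{\sim\mu(\cdot|\mathbf{w})}_{\mathcal{G}})$ over all $\mathbf{w}>0$ with $\|\mathbf{w}\|_2=1$. If $\mathbf{w}$ is such a weight vector with $|\langle\mathbf{w},\mathbf{r}^{\sim\mu(\cdot|\mathbf{w})}_{\mathcal{G}}-\mathbf{r}^*\rangle|=0$, then $\mathbf{w}$ is an optimal solution of (P2), i.e., it maximizes $f(\mathbf{r})$ in (P2).
   Context: $\langle\cdot,\cdot\rangle$ is the Euclidean inner product; $\mathbf{w}>0$ means all components are strictly positive; $\mathbf{H}\succeq 0$ means $\mathbf{H}$ is positive semidefinite. In (C2) the function $p\log_2(1+y/p)$ is understood as its perspective (value $0$ at $p=0$). The set $\mathcal{G}$ is a convex bounded set used to approximate the feasible rate region of a max-weight scheduler. *)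

theory Defs
  imports "HOL-Analysis.Analysis"
begin

text \<open>Perspective constraint (C2): r \<le> Delta0 * B * p * log2(1 + y/p), where the perspective
  p log2(1+y/p) is taken to be 0 at p = 0 and the constraint is only satisfiable inside
  the domain of the logarithm (1 + y/p > 0) when p > 0.\<close>
definition persp_le :: "real \<Rightarrow> real \<Rightarrow> real \<Rightarrow> real \<Rightarrow> real \<Rightarrow> bool" where
  "persp_le D0 B r p y \<longleftrightarrow>
     (if p = 0 then r \<le> 0
      else 1 + y / p > 0 \<and> r \<le> D0 * B * (p * log 2 (1 + y / p)))"

definition psd :: "real ^ 'n ^ 'n \<Rightarrow> bool" where
  "psd H \<longleftrightarrow> transpose H = H \<and> (\<forall>x. 0 \<le> x \<bullet> (H *v x))"

text \<open>The 2K x 2K matrix H is indexed by 'k + 'k: Inl i is the x-block, Inr i the phi-block.\<close>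
definition G_set :: "real \<Rightarrow> real \<Rightarrow> (real ^ 'k) \<Rightarrow> (real ^ 'k) \<Rightarrow> (real ^ 'k::finite) set" where
  "G_set D0 B m v = {r. \<exists>(p::real^'k) (y::real^'k) (H::real ^ ('k + 'k) ^ ('k + 'k)).
      (\<forall>k. r $ k \<ge> 0) \<and>
      (\<forall>k. persp_le D0 B (r $ k) (p $ k) (y $ k)) \<and>
      (\<forall>k. 0 \<le> p $ k \<and> p $ k \<le> 1) \<and>
      (\<Sum>k\<in>UNIV. p $ k) \<le> 1 \<and>
      (\<forall>k. H $ Inl k $ Inr k = y $ k - p $ k * m $ k) \<and>
      (\<forall>k. H $ Inr k $ Inr k = v $ k) \<and>
      (\<forall>i j. i \<noteq> j \<longrightarrow> H $ Inr i $ Inr j = 0) \<and>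
      (\<forall>k. H $ Inl k $ Inl k \<le> p $ k - (p $ k)^2) \<and>
      (\<Sum>i\<in>UNIV. \<Sum>j\<in>UNIV. H $ Inl i $ Inl j) \<le> (\<Sum>i\<in>UNIV. p $ i) - (\<Sum>i\<in>UNIV. p $ i)^2 \<and>
      psd H}"

definition admissible_w :: "real ^ 'k::finite \<Rightarrow> bool" where
  "admissible_w w \<longleftrightarrow> (\<forall>k. w $ k > 0) \<and> norm w = 1"

definition is_lin_maximizer :: "(real ^ 'k::finite) set \<Rightarrow> real ^ 'k \<Rightarrow> real ^ 'k \<Rightarrow> bool" where
  "is_lin_maximizer S w r \<longleftrightarrow> r \<in> S \<and> (\<forall>r'\<in>S. w \<bullet> r' \<le> w \<bullet> r)"

text \<open>Estimated rate r^{~mu(.|w)}_G = argmax_{r in G} <w,r> (well defined when unique).\<close>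
definition est_rate :: "(real ^ 'k::finite) set \<Rightarrow> real ^ 'k \<Rightarrow> real ^ 'k" where
  "est_rate S w = (THE r. is_lin_maximizer S w r)"

definition logutil :: "real ^ 'k::finite \<Rightarrow> ereal" where
  "logutil r = (if (\<forall>k. r $ k > 0) then ereal (\<Sum>k\<in>UNIV. ln (r $ k)) else -\<infinity>)"

end

theory Submission
  imports Defs
begin

text \<open>If the weight vector w cannot distinguish its estimated rate from the utility maximiser
  r*, then r* itself is a linear maximiser for w; by uniqueness it is the estimated rate.
  Every estimated rate lies in G, so none has larger utility than r*.\<close>

lemma is_lin_maximizer_inner_eq:
  assumes "is_lin_maximizer S w r" and "r' \<in> S" and "w \<bullet> r' = w \<bullet> r"
  shows "is_lin_maximizer S w r'"
  using assms unfolding is_lin_maximizer_def by simp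

lemma est_rate_is_lin_maximizer:
  assumes "\<exists>!r. is_lin_maximizer S w r"
  shows "is_lin_maximizer S w (est_rate S w)"
  using assms unfolding est_rate_def by (rule theI')

lemma est_rate_in_set:
  assumes "\<exists>!r. is_lin_maximizer S w r"
  shows "est_rate S w \<in> S"
  using est_rate_is_lin_maximizer[OF assms] unfolding is_lin_maximizer_def by simp

lemma est_rate_eqI:
  assumes uniq: "\<exists>!r. is_lin_maximizer S w r"
    and "r \<in> S" and "w \<bullet> est_rate S w = w \<bullet> r"
  shows "est_rate S w = r"
proof -
  have "is_lin_maximizer S w r"
    using is_lin_maximizer_inner_eq[OF est_rate_is_lin_maximizer[OF uniq]] assms(2,3) by simp
  with uniq est_rate_is_lin_maximizer[OF uniq] show ?thesis by blast
qed

theorem corollary2: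
  fixes D0 B :: real and m v :: "real ^ 'k::finite"
    and rstar w :: "real ^ 'k"
  assumes "D0 > 0" and "B > 0"
    and "\<forall>k. m $ k \<ge> 0" and "\<forall>k. v $ k \<ge> 0"
    and uniq: "\<forall>w'. admissible_w w' \<longrightarrow> (\<exists>!r. is_lin_maximizer (G_set D0 B m v) w' r)"
    and rstar: "rstar \<in> G_set D0 B m v" "\<forall>r\<in>G_set D0 B m v. logutil r \<le> logutil rstar"
    and w: "admissible_w w"
    and "\<bar>w \<bullet> (est_rate (G_set D0 B m v) w - rstar)\<bar> = 0"
  shows "\<forall>w'. admissible_w w' \<longrightarrow>
           logutil (est_rate (G_set D0 B m v) w') \<le> logutil (est_rate (G_set D0 B m v) w)"
proof (intro allI impI)
  fix w' :: "real ^ 'k" assume w': "admissible_w w'"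
  let ?G = "G_set D0 B m v"
  have "w \<bullet> est_rate ?G w = w \<bullet> rstar"
    using assms(9) by (simp add: inner_diff_right)
  then have "est_rate ?G w = rstar"
    using est_rate_eqI uniq w rstar(1) by blast
  moreover have "est_rate ?G w' \<in> ?G"
    using est_rate_in_set uniq w' by blast
  ultimately show "logutil (est_rate ?G w') \<le> logutil (est_rate ?G w)"
    using rstar(2) by simp
qed

end
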